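(* The collection of all simplified three-dimensional copulas is dense in $(\mathcal{C}^3,d_\infty)$.
   Context: $\mathcal{C}^3$ is the set of all three-dimensional copulas and $d_\infty(C_1,C_2)=\max_{\mathbf{x}\in[0,1]^3}|C_1(\mathbf{x})-C_2(\mathbf{x})|$. Write points of $[0,1]^3$ as $(\mathbf{u},v)$, $\mathbf{u}=(u_1,u_2)$, and let $\lambda$ be Lebesgue measure. For $C\in\mathcal{C}^3$, $K_C$ is (a version of) the regular conditional distribution of $(U_1,U_2)$ given $U_3=v$, $(U_1,U_2,U_3)\sim C$; $F_{1|3}(u_1|t)=K_C(t,[0,u_1]\times[0,1])$, $F_{2|3}(u_2|t)=K_C(t,[0,1]\times[0,u_2])$. $C$ is simplified if (i) there is a bivariate copula $A$ with $C(\mathbf{u},v)=\int_{[0,v]}A(F_{1|3}(u_1|t),F_{2|3}(u_2|t))\,d\lambda(t)$ for all $(\mathbf{u},v)$, and (ii) for $\lambda$-a.e. $t$ the functions $F_{1|3}(\cdot|t)$, $F_{2|3}(\cdot|t)$ are continuous. *)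

theory Defs
  imports "HOL-Probability.Probability"
begin

definition copula2 :: "(real \<Rightarrow> real \<Rightarrow> real) \<Rightarrow> bool" where
  "copula2 A \<longleftrightarrow>
     (\<forall>u\<in>{0..1}. A u 0 = 0 \<and> A 0 u = 0 \<and> A u 1 = u \<and> A 1 u = u) \<and>
     (\<forall>a1 b1 a2 b2. 0 \<le> a1 \<and> a1 \<le> b1 \<and> b1 \<le> 1 \<and> 0 \<le> a2 \<and> a2 \<le> b2 \<and> b2 \<le> 1 \<longrightarrow>
        A b1 b2 - A a1 b2 - A b1 a2 + A a1 a2 \<ge> 0)"

definition copula3 :: "(real \<Rightarrow> real \<Rightarrow> real \<Rightarrow> real) \<Rightarrow> bool" where
  "copula3 C \<longleftrightarrow>
     (\<forall>x\<in>{0..1}. \<forall>y\<in>{0..1}. C 0 x y = 0 \<and> C x 0 y = 0 \<and> C x y 0 = 0) \<and>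
     (\<forall>x\<in>{0..1}. C x 1 1 = x \<and> C 1 x 1 = x \<and> C 1 1 x = x) \<and>
     (\<forall>a1 b1 a2 b2 a3 b3. 0 \<le> a1 \<and> a1 \<le> b1 \<and> b1 \<le> 1 \<and> 0 \<le> a2 \<and> a2 \<le> b2 \<and> b2 \<le> 1
        \<and> 0 \<le> a3 \<and> a3 \<le> b3 \<and> b3 \<le> 1 \<longrightarrow>
        C b1 b2 b3 - C a1 b2 b3 - C b1 a2 b3 - C b1 b2 a3
        + C a1 a2 b3 + C a1 b2 a3 + C b1 a2 a3 - C a1 a2 a3 \<ge> 0)"

definition d_inf :: "(real \<Rightarrow> real \<Rightarrow> real \<Rightarrow> real) \<Rightarrow> (real \<Rightarrow> real \<Rightarrow> real \<Rightarrow> real) \<Rightarrow> real" where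
  "d_inf C1 C2 = (SUP x\<in>{0..1} \<times> {0..1} \<times> {0..1}.
      \<bar>C1 (fst x) (fst (snd x)) (snd (snd x)) - C2 (fst x) (fst (snd x)) (snd (snd x))\<bar>)"

text \<open>K is a version of the regular conditional distribution of (U1,U2) given U3 = t,
  for (U1,U2,U3) distributed according to C: a Markov kernel from the real line into
  probability measures on [0,1]^2 whose mixture against Lebesgue measure on [0,v]
  reproduces C on boxes.\<close>
definition cond_kernel :: "(real \<Rightarrow> real \<Rightarrow> real \<Rightarrow> real) \<Rightarrow> (real \<Rightarrow> (real \<times> real) measure) \<Rightarrow> bool" where
  "cond_kernel C K \<longleftrightarrow>
     K \<in> borel \<rightarrow>\<^sub>M prob_algebra borel \<and>
     (\<forall>t. emeasure (K t) ({0..1} \<times> {0..1}) = 1) \<and>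
     (\<forall>u1\<in>{0..1}. \<forall>u2\<in>{0..1}. \<forall>v\<in>{0..1}.
        C u1 u2 v = (LINT t:{0..v}|lborel. measure (K t) ({0..u1} \<times> {0..u2})))"

definition F13 :: "(real \<Rightarrow> (real \<times> real) measure) \<Rightarrow> real \<Rightarrow> real \<Rightarrow> real" where
  "F13 K t u1 = measure (K t) ({0..u1} \<times> {0..1})"

definition F23 :: "(real \<Rightarrow> (real \<times> real) measure) \<Rightarrow> real \<Rightarrow> real \<Rightarrow> real" where
  "F23 K t u2 = measure (K t) ({0..1} \<times> {0..u2})"

definition simplified :: "(real \<Rightarrow> real \<Rightarrow> real \<Rightarrow> real) \<Rightarrow> bool" where
  "simplified C \<longleftrightarrow> (\<exists>K A. cond_kernel C K \<and> copula2 A \<and>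
     (\<forall>u1\<in>{0..1}. \<forall>u2\<in>{0..1}. \<forall>v\<in>{0..1}.
        C u1 u2 v = (LINT t:{0..v}|lborel. A (F13 K t u1) (F23 K t u2))) \<and>
     (AE t in lborel. t \<in> {0..1} \<longrightarrow>
        continuous_on UNIV (F13 K t) \<and> continuous_on UNIV (F23 K t)))"

end

theory Submission
  imports Defs
begin

text \<open>
  Cut the unit cube into \<open>n\<^sup>3\<close> cells of side \<open>1/n\<close>; their \<open>C\<close>-volumes are nonnegative and
  sum to \<open>1\<close>. Enumerate the cells with the third index slowest and let the time
  \<open>t = U\<^sub>3\<close> run through consecutive intervals whose lengths are these volumes; while
  \<open>t\<close> is in the interval of the cell \<open>(i, j, k)\<close>, let \<open>(U\<^sub>1, U\<^sub>2)\<close> be uniform on the square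
  \<open>[i/n, (i+1)/n] \<times> [j/n, (j+1)/n]\<close>. The cells of layer \<open>k\<close> use up exactly the time interval
  \<open>[k/n, (k+1)/n]\<close>, so the resulting copula agrees with \<open>C\<close> at all grid points. Its
  conditional laws are products of continuous distribution functions, so it is simplified
  with the independence copula. Copulas are \<open>1\<close>-Lipschitz in each argument, hence agreement
  on the grid gives uniform distance at most \<open>6/n\<close>.
\<close>

section \<open>Copulas\<close>

lemma copula3_grounded:
  assumes "copula3 C" "x \<in> {0..1}" "y \<in> {0..1}"
  shows "C 0 x y = 0" "C x 0 y = 0" "C x y 0 = 0"
  using assms unfolding copula3_def by blast+

lemma copula3_margins:
  assumes "copula3 C" "x \<in> {0..1}"
  shows "C x 1 1 = x" "C 1 x 1 = x" "C 1 1 x = x"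
  using assms unfolding copula3_def by blast+

lemma copula3_volume_nonneg:
  assumes "copula3 C" "0 \<le> a1" "a1 \<le> b1" "b1 \<le> 1" "0 \<le> a2" "a2 \<le> b2" "b2 \<le> 1"
    "0 \<le> a3" "a3 \<le> b3" "b3 \<le> 1"
  shows "C b1 b2 b3 - C a1 b2 b3 - C b1 a2 b3 - C b1 b2 a3
    + C a1 a2 b3 + C a1 b2 a3 + C b1 a2 a3 - C a1 a2 a3 \<ge> 0"
  using assms unfolding copula3_def by blast

lemma copula3_swap12:
  assumes "copula3 C" shows "copula3 (\<lambda>x y z. C y x z)"
  unfolding copula3_def
proof (intro conjI ballI allI impI)
  fix x y :: real assume "x \<in> {0..1}" "y \<in> {0..1}"
  then show "C x 0 y = 0" "C 0 x y = 0" "C y x 0 = 0"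
    using copula3_grounded[OF assms] by auto
next
  fix x :: real assume "x \<in> {0..1}"
  then show "C 1 x 1 = x" "C x 1 1 = x" "C 1 1 x = x"
    using copula3_margins[OF assms] by auto
next
  fix a1 b1 a2 b2 a3 b3 :: real
  assume "0 \<le> a1 \<and> a1 \<le> b1 \<and> b1 \<le> 1 \<and> 0 \<le> a2 \<and> a2 \<le> b2 \<and> b2 \<le> 1
    \<and> 0 \<le> a3 \<and> a3 \<le> b3 \<and> b3 \<le> 1"
  then show "0 \<le> C b2 b1 b3 - C b2 a1 b3 - C a2 b1 b3 - C b2 b1 a3
    + C a2 a1 b3 + C b2 a1 a3 + C a2 b1 a3 - C a2 a1 a3"
    using copula3_volume_nonneg[OF assms, of a2 b2 a1 b1 a3 b3] by linarith
qed

lemma copula3_swap13: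
  assumes "copula3 C" shows "copula3 (\<lambda>x y z. C z y x)"
  unfolding copula3_def
proof (intro conjI ballI allI impI)
  fix x y :: real assume "x \<in> {0..1}" "y \<in> {0..1}"
  then show "C y x 0 = 0" "C y 0 x = 0" "C 0 y x = 0"
    using copula3_grounded[OF assms] by auto
next
  fix x :: real assume "x \<in> {0..1}"
  then show "C 1 1 x = x" "C 1 x 1 = x" "C x 1 1 = x"
    using copula3_margins[OF assms] by auto
next
  fix a1 b1 a2 b2 a3 b3 :: real
  assume "0 \<le> a1 \<and> a1 \<le> b1 \<and> b1 \<le> 1 \<and> 0 \<le> a2 \<and> a2 \<le> b2 \<and> b2 \<le> 1
    \<and> 0 \<le> a3 \<and> a3 \<le> b3 \<and> b3 \<le> 1"
  then show "0 \<le> C b3 b2 b1 - C b3 b2 a1 - C b3 a2 b1 - C a3 b2 b1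
    + C b3 a2 a1 + C a3 b2 a1 + C a3 a2 b1 - C a3 a2 a1"
    using copula3_volume_nonneg[OF assms, of a3 b3 a2 b2 a1 b1] by linarith
qed

lemma copula3_increment1_bounds:
  assumes "copula3 C" "0 \<le> a" "a \<le> b" "b \<le> 1" "y \<in> {0..1}" "z \<in> {0..1}"
  shows "0 \<le> C b y z - C a y z" "C b y z - C a y z \<le> b - a"
proof -
  have ab: "a \<in> {0..1}" "b \<in> {0..1}" and unit: "(0::real) \<in> {0..1}" "(1::real) \<in> {0..1}"
    using assms by auto
  note vol = copula3_volume_nonneg[OF assms(1-4)]
  note zero = copula3_grounded[OF assms(1)]
  have "0 \<le> C b y z - C a y z"
    using vol[of 0 y 0 z] assms ab unit by (simp add: zero)
  moreover have "0 \<le> C b y 1 - C a y 1 - C b y z + C a y z"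
    using vol[of 0 y z 1] assms ab unit by (simp add: zero)
  moreover have "0 \<le> b - a - C b y 1 + C a y 1"
    using vol[of y 1 0 1] assms ab unit by (simp add: zero copula3_margins[OF assms(1)])
  ultimately show "0 \<le> C b y z - C a y z" "C b y z - C a y z \<le> b - a" by linarith+
qed

lemma copula3_lipschitz:
  assumes "copula3 C" "x1 \<in> {0..1}" "x2 \<in> {0..1}" "x3 \<in> {0..1}"
    "y1 \<in> {0..1}" "y2 \<in> {0..1}" "y3 \<in> {0..1}"
  shows "\<bar>C x1 x2 x3 - C y1 y2 y3\<bar> \<le> \<bar>x1 - y1\<bar> + \<bar>x2 - y2\<bar> + \<bar>x3 - y3\<bar>"
proof -
  have lip1: "\<bar>D a y z - D b y z\<bar> \<le> \<bar>a - b\<bar>"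
    if "copula3 D" "a \<in> {0..1}" "b \<in> {0..1}" "y \<in> {0..1}" "z \<in> {0..1}" for D a b y z
    using copula3_increment1_bounds[OF that(1), of a b y z] copula3_increment1_bounds[OF that(1), of b a y z] that
    by (cases "a \<le> b") auto
  have "\<bar>C x1 x2 x3 - C y1 x2 x3\<bar> \<le> \<bar>x1 - y1\<bar>"
    using lip1[OF assms(1)] assms by blast
  moreover have "\<bar>C y1 x2 x3 - C y1 y2 x3\<bar> \<le> \<bar>x2 - y2\<bar>"
    using lip1[OF copula3_swap12[OF assms(1)]] assms by blast
  moreover have "\<bar>C y1 y2 x3 - C y1 y2 y3\<bar> \<le> \<bar>x3 - y3\<bar>"
    using lip1[OF copula3_swap13[OF assms(1)]] assms by blast
  ultimately show ?thesis by linarith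
qed

lemma copula2_product: "copula2 (\<lambda>a b. a * b)"
  unfolding copula2_def
proof (intro conjI ballI allI impI)
  fix a1 b1 a2 b2 :: real
  assume "0 \<le> a1 \<and> a1 \<le> b1 \<and> b1 \<le> 1 \<and> 0 \<le> a2 \<and> a2 \<le> b2 \<and> b2 \<le> 1"
  then have "0 \<le> (b1 - a1) * (b2 - a2)" by simp
  then show "0 \<le> b1 * b2 - a1 * b2 - b1 * a2 + a1 * a2" by (simp add: algebra_simps)
qed simp_all

lemma exists_grid_point_near:
  assumes "0 < n" "y \<in> {0..1}"
  obtains a where "a \<le> n" "\<bar>y - real a / real n\<bar> \<le> 1 / real n"
proof
  define a where "a = nat \<lfloor>real n * y\<rfloor>"
  have "real a \<le> real n * y" "real n * y < real a + 1"
    using assms unfolding a_def by (simp_all add: of_nat_nat)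
  moreover have "real n * y \<le> real n"
    using assms by simp
  ultimately show "a \<le> n"
    by linarith
  have "\<bar>y - real a / real n\<bar> = \<bar>real n * y - real a\<bar> / real n"
    using assms by (simp add: field_simps)
  also have "\<dots> \<le> 1 / real n"
    using \<open>real a \<le> real n * y\<close> \<open>real n * y < real a + 1\<close> by (intro divide_right_mono) auto
  finally show "\<bar>y - real a / real n\<bar> \<le> 1 / real n" .
qed

lemma d_inf_le_of_eq_on_grid:
  assumes C: "copula3 C" and S: "copula3 S" and "0 < n"
    and grid: "\<And>a b k. a \<le> n \<Longrightarrow> b \<le> n \<Longrightarrow> k \<le> n \<Longrightarrow>
      C (real a / real n) (real b / real n) (real k / real n)
      = S (real a / real n) (real b / real n) (real k / real n)"
  shows "d_inf C S \<le> 6 / real n"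
  unfolding d_inf_def
proof (rule cSUP_least)
  show "{0..1} \<times> {0..1} \<times> {0..1} \<noteq> ({} :: (real \<times> real \<times> real) set)"
    by auto
next
  fix x :: "real \<times> real \<times> real"
  assume "x \<in> {0..1} \<times> {0..1} \<times> {0..1}"
  then obtain x1 x2 x3 where x: "x = (x1, x2, x3)" "x1 \<in> {0..1}" "x2 \<in> {0..1}" "x3 \<in> {0..1}"
    by auto
  obtain a b k where abk: "a \<le> n" "b \<le> n" "k \<le> n"
    and near: "\<bar>x1 - real a / real n\<bar> \<le> 1 / real n" "\<bar>x2 - real b / real n\<bar> \<le> 1 / real n"
      "\<bar>x3 - real k / real n\<bar> \<le> 1 / real n"
    using exists_grid_point_near[OF \<open>0 < n\<close>] x(2-4) by metis
  have unit: "real a / real n \<in> {0..1}" "real b / real n \<in> {0..1}" "real k / real n \<in> {0..1}"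
    using abk \<open>0 < n\<close> by auto
  have "\<bar>C x1 x2 x3 - C (real a / real n) (real b / real n) (real k / real n)\<bar> \<le> 3 / real n"
    using copula3_lipschitz[OF C x(2-4) unit] near by simp
  moreover have "\<bar>S x1 x2 x3 - S (real a / real n) (real b / real n) (real k / real n)\<bar> \<le> 3 / real n"
    using copula3_lipschitz[OF S x(2-4) unit] near by simp
  ultimately show "\<bar>C (fst x) (fst (snd x)) (snd (snd x)) - S (fst x) (fst (snd x)) (snd (snd x))\<bar>
      \<le> 6 / real n"
    using grid[OF abk] x(1) by simp
qed

lemma sum_lessThan_mult:
  fixes f :: "nat \<Rightarrow> 'a::comm_monoid_add"
  shows "(\<Sum>q<a * b. f q) = (\<Sum>x<a. \<Sum>y<b. f (x * b + y))"
proof -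
  have "(\<Sum>y\<in>{x * b..<x * b + b}. f y) = (\<Sum>y<b. f (x * b + y))" for x
    using sum.shift_bounds_nat_ivl[of f 0 "x * b" b] by (simp add: atLeast0LessThan add.commute)
  then show ?thesis by (simp add: sum.nat_group[symmetric])
qed

lemma sum_unit_ramps: "y \<le> real m \<Longrightarrow> (\<Sum>i<m. max 0 (min 1 (y - real i))) = max 0 y"
proof (induction m arbitrary: y)
  case (Suc m)
  have "(\<Sum>i<Suc m. max 0 (min 1 (y - real i)))
      = max 0 (min 1 y) + (\<Sum>i<m. max 0 (min 1 ((y - 1) - real i)))"
    by (subst sum.lessThan_Suc_shift) (simp add: algebra_simps)
  also have "(\<Sum>i<m. max 0 (min 1 ((y - 1) - real i))) = max 0 (y - 1)"
    using Suc by simp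
  finally show ?case by simp
qed simp

lemma sum_lessThan_if_less: "c \<le> n \<Longrightarrow> (\<Sum>k<n. if k < c then f k else 0) = (\<Sum>k<c. f k)"
  for c n :: nat
  by (simp add: sum.If_cases Int_absorb1 lessThan_subset_iff lessThan_def[symmetric])

lemma sum3_lessThan_restrict:
  fixes f :: "nat \<Rightarrow> nat \<Rightarrow> nat \<Rightarrow> 'a::comm_monoid_add"
  assumes "a \<le> n" "b \<le> n" "c \<le> n"
  shows "(\<Sum>k<n. \<Sum>i<n. \<Sum>j<n. if k < c \<and> i < a \<and> j < b then f i j k else 0)
    = (\<Sum>k<c. \<Sum>i<a. \<Sum>j<b. f i j k)"
proof -
  have "(\<Sum>j<n. if k < c \<and> i < a \<and> j < b then f i j k else 0)
      = (if k < c \<and> i < a then \<Sum>j<b. f i j k else 0)" for i k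
    using sum_lessThan_if_less[OF assms(2), of "\<lambda>j. f i j k"] by auto
  moreover have "(\<Sum>i<n. if k < c \<and> i < a then \<Sum>j<b. f i j k else 0)
      = (if k < c then \<Sum>i<a. \<Sum>j<b. f i j k else 0)" for k
    using sum_lessThan_if_less[OF assms(1), of "\<lambda>i. \<Sum>j<b. f i j k"] by auto
  ultimately show ?thesis
    using sum_lessThan_if_less[OF assms(3)] by simp
qed

lemma sum_lessThan_telescope_cong:
  fixes g :: "nat \<Rightarrow> 'a::ab_group_add"
  assumes "\<And>j. f j = g (Suc j) - g j"
  shows "(\<Sum>j<m. f j) = g m - g 0"
  using assms by (simp add: sum_lessThan_telescope)

lemma sum_volume_telescope:
  fixes F :: "nat \<Rightarrow> nat \<Rightarrow> nat \<Rightarrow> 'a::ab_group_add"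
  shows "(\<Sum>k<c. \<Sum>i<a. \<Sum>j<b. F (Suc i) (Suc j) (Suc k) - F i (Suc j) (Suc k)
      - F (Suc i) j (Suc k) - F (Suc i) (Suc j) k + F i j (Suc k) + F i (Suc j) k
      + F (Suc i) j k - F i j k)
    = F a b c - F 0 b c - F a 0 c - F a b 0 + F 0 0 c + F 0 b 0 + F a 0 0 - F 0 0 0"
proof -
  define G where "G i k y = F (Suc i) y (Suc k) - F i y (Suc k) - F (Suc i) y k + F i y k" for i k y
  define H where "H k x = F x b (Suc k) - F x b k - F x 0 (Suc k) + F x 0 k" for k x
  define L where "L k = F a b k - F a 0 k - F 0 b k + F 0 0 k" for k
  have "(\<Sum>k<c. \<Sum>i<a. \<Sum>j<b. F (Suc i) (Suc j) (Suc k) - F i (Suc j) (Suc k)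
      - F (Suc i) j (Suc k) - F (Suc i) (Suc j) k + F i j (Suc k) + F i (Suc j) k
      + F (Suc i) j k - F i j k) = (\<Sum>k<c. \<Sum>i<a. G i k b - G i k 0)"
    by (intro sum.cong refl sum_lessThan_telescope_cong) (simp add: G_def algebra_simps)
  also have "\<dots> = (\<Sum>k<c. H k a - H k 0)"
    by (intro sum.cong refl sum_lessThan_telescope_cong) (simp add: G_def H_def algebra_simps)
  also have "\<dots> = L c - L 0"
    by (intro sum_lessThan_telescope_cong) (simp add: H_def L_def algebra_simps)
  finally show ?thesis by (simp add: L_def algebra_simps)
qed

(* Cell number q = (k * n + i) * n + j stands for the cell (i, j, k): the third index varies
   slowest, so the cells of each horizontal layer are numbered consecutively. *)
definition cell1 :: "nat \<Rightarrow> nat \<Rightarrow> nat" where "cell1 n q = q div n mod n"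
definition cell2 :: "nat \<Rightarrow> nat \<Rightarrow> nat" where "cell2 n q = q mod n"
definition cell3 :: "nat \<Rightarrow> nat \<Rightarrow> nat" where "cell3 n q = q div (n * n)"

lemma cell1_less: "0 < n \<Longrightarrow> cell1 n q < n"
  and cell2_less: "0 < n \<Longrightarrow> cell2 n q < n"
  unfolding cell1_def cell2_def by simp_all

lemma cell3_less: "q < n * n * n \<Longrightarrow> cell3 n q < n"
  unfolding cell3_def by (rule less_mult_imp_div_less) (simp add: mult.assoc)

lemma cell_decode:
  assumes "i < n" "j < n"
  shows "cell1 n ((k * n + i) * n + j) = i" "cell2 n ((k * n + i) * n + j) = j"
    "cell3 n ((k * n + i) * n + j) = k"
proof -
  have div_n: "((k * n + i) * n + j) div n = k * n + i"
    using assms by simp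
  then show "cell1 n ((k * n + i) * n + j) = i" "cell2 n ((k * n + i) * n + j) = j"
    unfolding cell1_def cell2_def using assms by simp_all
  show "cell3 n ((k * n + i) * n + j) = k"
    unfolding cell3_def div_mult2_eq div_n using assms by simp
qed

lemma sum_cells:
  "(\<Sum>q<k * n * n. f (cell1 n q) (cell2 n q) (cell3 n q)) = (\<Sum>k'<k. \<Sum>i<n. \<Sum>j<n. f i j k')"
  by (simp add: sum_lessThan_mult cell_decode)

section \<open>Uniform laws on grid cells\<close>

definition cell_cdf :: "nat \<Rightarrow> nat \<Rightarrow> real \<Rightarrow> real" where
  "cell_cdf n i u = max 0 (min 1 (real n * u - real i))"

lemma cell_cdf_0 [simp]: "cell_cdf n i 0 = 0"
  unfolding cell_cdf_def by simp

lemma cell_cdf_1: "i < n \<Longrightarrow> cell_cdf n i 1 = 1"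
  unfolding cell_cdf_def by simp

lemma cell_cdf_grid: "0 < n \<Longrightarrow> cell_cdf n i (real a / real n) = (if i < a then 1 else 0)"
  unfolding cell_cdf_def by auto

lemma cell_cdf_mono: "u \<le> u' \<Longrightarrow> cell_cdf n i u \<le> cell_cdf n i u'"
  unfolding cell_cdf_def using mult_left_mono[of u u' "real n"] by (auto intro!: max.mono min.mono)

lemma continuous_on_cell_cdf: "continuous_on UNIV (cell_cdf n i)"
  unfolding cell_cdf_def by (intro continuous_intros)

lemma sum_cell_cdf: "0 < n \<Longrightarrow> u \<in> {0..1} \<Longrightarrow> (\<Sum>i<n. cell_cdf n i u) = real n * u"
  unfolding cell_cdf_def using sum_unit_ramps[of "real n * u" n] by (auto simp: mult_le_cancel_left1)

definition cell_unif :: "nat \<Rightarrow> nat \<Rightarrow> real measure" where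
  "cell_unif n i = uniform_measure lborel {real i / real n .. (real i + 1) / real n}"

lemma sets_cell_unif [simp]: "sets (cell_unif n i) = sets borel"
  unfolding cell_unif_def by simp

lemma prob_space_cell_unif: "0 < n \<Longrightarrow> prob_space (cell_unif n i)"
  unfolding cell_unif_def
  by (rule prob_space_uniform_measure) (auto simp: field_simps diff_divide_distrib[symmetric])

lemma measure_cell_unif:
  assumes "0 < n" shows "measure (cell_unif n i) {0..u} = cell_cdf n i u"
proof -
  define a b where "a = real i / real n" and "b = (real i + 1) / real n"
  have "0 \<le> a" "a \<le> b" and len: "b - a = 1 / real n"
    using assms by (auto simp: a_def b_def field_simps)
  have "measure (cell_unif n i) {0..u} = measure lborel ({a..b} \<inter> {0..u}) / measure lborel {a..b}"
    unfolding cell_unif_def a_def b_def using assms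
    by (subst measure_uniform_measure) (auto simp: field_simps)
  also have "\<dots> = real n * max 0 (min b u - a)"
    using \<open>0 \<le> a\<close> \<open>a \<le> b\<close> len by (simp add: Int_atLeastAtMost max_def)
  also have "\<dots> = cell_cdf n i u"
    using assms unfolding cell_cdf_def a_def b_def by (auto simp: field_simps min_def max_def)
  finally show ?thesis .
qed

definition cell_unif2 :: "nat \<Rightarrow> nat \<Rightarrow> nat \<Rightarrow> (real \<times> real) measure" where
  "cell_unif2 n i j = cell_unif n i \<Otimes>\<^sub>M cell_unif n j"

lemma cell_unif2_in_prob_algebra:
  assumes "0 < n" shows "cell_unif2 n i j \<in> space (prob_algebra borel)"
proof -
  have "sets (cell_unif2 n i j) = sets (borel \<Otimes>\<^sub>M borel)"
    unfolding cell_unif2_def by (rule sets_pair_measure_cong) simp_all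
  also have "\<dots> = sets (borel :: (real \<times> real) measure)"
    by (simp only: borel_prod)
  finally have "sets (cell_unif2 n i j) = sets borel" .
  moreover have "prob_space (cell_unif2 n i j)"
    unfolding cell_unif2_def using assms by (intro prob_space_pair prob_space_cell_unif)
  ultimately show ?thesis by (simp add: space_prob_algebra)
qed

lemma measure_cell_unif2_box:
  assumes "0 < n"
  shows "measure (cell_unif2 n i j) ({0..u1} \<times> {0..u2}) = cell_cdf n i u1 * cell_cdf n j u2"
proof -
  interpret P: prob_space "cell_unif n j" using assms by (rule prob_space_cell_unif)
  have "emeasure (cell_unif2 n i j) ({0..u1} \<times> {0..u2})
      = emeasure (cell_unif n i) {0..u1} * emeasure (cell_unif n j) {0..u2}"
    unfolding cell_unif2_def by (rule P.emeasure_pair_measure_Times) simp_all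
  then show ?thesis
    using assms by (simp add: measure_def enn2real_mult measure_cell_unif[symmetric])
qed

lemma emeasure_cell_unif2_unit_square:
  assumes "0 < n" "i < n" "j < n"
  shows "emeasure (cell_unif2 n i j) ({0..1} \<times> {0..1}) = 1"
proof -
  interpret prob_space "cell_unif2 n i j"
    using cell_unif2_in_prob_algebra[OF assms(1)] by (simp add: space_prob_algebra)
  show ?thesis
    using assms by (simp add: emeasure_eq_measure measure_cell_unif2_box cell_cdf_1)
qed

section \<open>Piecewise constant kernels\<close>

(* Recursion over the thresholds turns measurability into a plain induction. *)
primrec step_kernel :: "(nat \<Rightarrow> 'a measure) \<Rightarrow> (nat \<Rightarrow> real) \<Rightarrow> nat \<Rightarrow> real \<Rightarrow> 'a measure" where
  "step_kernel P c 0 t = P 0"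
| "step_kernel P c (Suc r) t = (if c (Suc r) \<le> t then P (Suc r) else step_kernel P c r t)"

lemma step_kernel_cases: "\<exists>q. step_kernel P c r t = P q"
  by (induction r) auto

lemma measurable_step_kernel:
  assumes "\<And>q. P q \<in> space (prob_algebra M)"
  shows "step_kernel P c r \<in> borel \<rightarrow>\<^sub>M prob_algebra M"
proof (induction r)
  case (Suc r)
  have "(\<lambda>t. if c (Suc r) \<le> t then P (Suc r) else step_kernel P c r t) \<in> borel \<rightarrow>\<^sub>M prob_algebra M"
    using Suc assms by measurable
  then show ?case by (simp add: fun_eq_iff)
qed (simp add: assms)

lemma step_kernel_eq:
  assumes "mono c" "q \<le> r" "c q \<le> t" "t < c (Suc q)"
  shows "step_kernel P c r t = P q"
  using assms(2)
proof (induction r)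
  case (Suc r)
  show ?case
  proof (cases "q = Suc r")
    case False
    then have "q \<le> r" using Suc.prems by simp
    moreover have "t < c (Suc r)"
      using assms(4) monoD[OF assms(1), of "Suc q" "Suc r"] \<open>q \<le> r\<close> by simp
    ultimately show ?thesis using Suc.IH by simp
  qed (use assms(3) in simp)
qed simp

lemma step_interval_unique:
  fixes c :: "nat \<Rightarrow> real"
  assumes "mono c" "t \<in> {c p..<c (Suc p)}" "t \<in> {c q..<c (Suc q)}"
  shows "p = q"
proof (rule ccontr)
  assume "p \<noteq> q"
  then consider "Suc p \<le> q" | "Suc q \<le> p" by linarith
  then show False
  proof cases
    case 1
    then show False using assms(2,3) monoD[OF assms(1) 1] by auto
  next
    case 2
    then show False using assms(2,3) monoD[OF assms(1) 2] by auto
  qed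
qed

lemma step_interval_exists:
  fixes c :: "nat \<Rightarrow> real"
  assumes "c 0 \<le> t" "t < c N"
  obtains q where "q < N" "t \<in> {c q..<c (Suc q)}"
  using assms
proof (induction N arbitrary: thesis)
  case (Suc N)
  show ?case
  proof (cases "c N \<le> t")
    case True
    then show ?thesis using Suc.prems by (intro Suc.prems(1)[of N]) auto
  next
    case False
    show ?thesis
    proof (rule Suc.IH)
      show "\<And>q. q < N \<Longrightarrow> t \<in> {c q..<c (Suc q)} \<Longrightarrow> thesis"
        by (rule Suc.prems(1)) auto
      show "c 0 \<le> t" "t < c N" using Suc.prems(2) False by auto
    qed
  qed
qed simp

lemma measure_step_kernel:
  fixes c :: "nat \<Rightarrow> real"
  assumes "mono c" "c 0 \<le> t" "t < c N"
  shows "measure (step_kernel P c (N - 1) t) B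
    = (\<Sum>q<N. indicator {c q..<c (Suc q)} t * measure (P q) B)"
proof -
  obtain q0 where q0: "q0 < N" "t \<in> {c q0..<c (Suc q0)}"
    using step_interval_exists[OF assms(2,3)] .
  have "(\<Sum>q<N. indicator {c q..<c (Suc q)} t * measure (P q) B)
      = (\<Sum>q<N. if q = q0 then measure (P q0) B else 0)"
  proof (rule sum.cong)
    fix q
    show "indicator {c q..<c (Suc q)} t * measure (P q) B = (if q = q0 then measure (P q0) B else 0)"
    proof (cases "q = q0")
      case False
      then have "t \<notin> {c q..<c (Suc q)}"
        using step_interval_unique[OF assms(1) _ q0(2)] by blast
      then show ?thesis using False by simp
    qed (use q0 in simp)
  qed simp
  also have "\<dots> = measure (step_kernel P c (N - 1) t) B"
    using q0 step_kernel_eq[OF assms(1), of q0 "N - 1" t P] by simp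
  finally show ?thesis ..
qed

lemma integral_step_kernel:
  assumes P: "\<And>q. P q \<in> space (prob_algebra M)" and B: "B \<in> sets M"
    and c: "mono c" "c 0 = 0" and v: "0 \<le> v" "v \<le> c N"
  shows "(LINT t:{0..v}|lborel. measure (step_kernel P c (N - 1) t) B)
       = (\<Sum>q<N. measure lborel ({0..v} \<inter> {c q..<c (Suc q)}) * measure (P q) B)"
proof -
  let ?I = "\<lambda>q. {0..v} \<inter> {c q..<c (Suc q)}"
  have ae: "AE t in lborel. indicator {0..v} t * measure (step_kernel P c (N - 1) t) B
      = (\<Sum>q<N. indicator (?I q) t * measure (P q) B)"
    using AE_lborel_singleton[of "c N"]
  proof eventually_elim
    case (elim t)
    show ?case
    proof (cases "t \<in> {0..v}")
      case True
      then have "c 0 \<le> t" "t < c N" using c v elim by auto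
      then have "measure (step_kernel P c (N - 1) t) B
          = (\<Sum>q<N. indicator {c q..<c (Suc q)} t * measure (P q) B)"
        by (rule measure_step_kernel[OF c(1)])
      also have "\<dots> = (\<Sum>q<N. indicator (?I q) t * measure (P q) B)"
        using True by (simp add: indicator_inter_arith)
      finally show ?thesis using True by simp
    next
      case False
      then show ?thesis by (simp add: indicator_inter_arith)
    qed
  qed
  have "(LINT t:{0..v}|lborel. measure (step_kernel P c (N - 1) t) B)
      = (\<integral>t. (\<Sum>q<N. indicator (?I q) t * measure (P q) B) \<partial>lborel)"
    unfolding set_lebesgue_integral_def
  proof (rule integral_cong_AE)
    have "(\<lambda>t. measure (step_kernel P c (N - 1) t) B) \<in> borel_measurable borel"
      using B by (intro measure_measurable_prob_algebra2[OF _ measurable_step_kernel[OF P]]) simp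
    then show "(\<lambda>t. indicator {0..v} t *\<^sub>R measure (step_kernel P c (N - 1) t) B)
        \<in> borel_measurable lborel"
      by simp
    show "(\<lambda>t. \<Sum>q<N. indicator (?I q) t * measure (P q) B) \<in> borel_measurable lborel"
      by measurable
  qed (use ae in simp)
  also have "\<dots> = (\<Sum>q<N. measure lborel (?I q) * measure (P q) B)"
  proof (subst Bochner_Integration.integral_sum)
    have "emeasure lborel (?I q) < \<top>" for q
      by (rule order_le_less_trans[OF emeasure_mono[of _ "{0..v}"]]) (use v in auto)
    then show "integrable lborel (\<lambda>t. indicator (?I q) t * measure (P q) B)" for q
      by (simp add: integrable_indicator_iff)
  qed simp_all
  finally show ?thesis .
qed

section \<open>The grid approximation\<close>

locale grid_approximation =
  fixes C :: "real \<Rightarrow> real \<Rightarrow> real \<Rightarrow> real" and n :: nat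
  assumes copula: "copula3 C" and n_pos: "0 < n"
begin

definition grid_value :: "nat \<Rightarrow> nat \<Rightarrow> nat \<Rightarrow> real" where
  "grid_value a b k = C (real a / real n) (real b / real n) (real k / real n)"

definition cell_volume :: "nat \<Rightarrow> nat \<Rightarrow> nat \<Rightarrow> real" where
  "cell_volume i j k = grid_value (Suc i) (Suc j) (Suc k) - grid_value i (Suc j) (Suc k)
     - grid_value (Suc i) j (Suc k) - grid_value (Suc i) (Suc j) k + grid_value i j (Suc k)
     + grid_value i (Suc j) k + grid_value (Suc i) j k - grid_value i j k"

lemma grid_point_in_unit: "a \<le> n \<Longrightarrow> real a / real n \<in> {0..1}"
  using n_pos by auto

lemma cell_volume_nonneg: "i < n \<Longrightarrow> j < n \<Longrightarrow> k < n \<Longrightarrow> 0 \<le> cell_volume i j k"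
  unfolding cell_volume_def grid_value_def
  by (rule copula3_volume_nonneg[OF copula]) (use n_pos in \<open>auto simp: field_simps\<close>)

lemma sum_cell_volume:
  assumes "a \<le> n" "b \<le> n" "k \<le> n"
  shows "(\<Sum>k'<k. \<Sum>i<a. \<Sum>j<b. cell_volume i j k') = grid_value a b k"
  unfolding cell_volume_def sum_volume_telescope
  using assms grid_point_in_unit by (simp add: grid_value_def copula3_grounded[OF copula])

lemma sum_cell_volume_slice1:
  assumes "i < n" shows "(\<Sum>k<n. \<Sum>j<n. cell_volume i j k) = 1 / real n"
proof -
  have "(\<Sum>k<n. \<Sum>j<n. cell_volume i j k)
      = (\<Sum>k<n. \<Sum>i'<Suc i. \<Sum>j<n. cell_volume i' j k) - (\<Sum>k<n. \<Sum>i'<i. \<Sum>j<n. cell_volume i' j k)"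
    by (simp add: sum.distrib)
  also have "\<dots> = grid_value (Suc i) n n - grid_value i n n"
    using assms sum_cell_volume[of "Suc i" n n] sum_cell_volume[of i n n] by simp
  also have "\<dots> = 1 / real n"
    using assms n_pos grid_point_in_unit
    by (simp add: grid_value_def copula3_margins[OF copula] diff_divide_distrib[symmetric])
  finally show ?thesis .
qed

lemma sum_cell_volume_slice2:
  assumes "j < n" shows "(\<Sum>k<n. \<Sum>i<n. cell_volume i j k) = 1 / real n"
proof -
  have "(\<Sum>k<n. \<Sum>i<n. cell_volume i j k)
      = (\<Sum>k<n. \<Sum>i<n. \<Sum>j'<Suc j. cell_volume i j' k) - (\<Sum>k<n. \<Sum>i<n. \<Sum>j'<j. cell_volume i j' k)"
    by (simp add: sum.distrib)
  also have "\<dots> = grid_value n (Suc j) n - grid_value n j n"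
    using assms sum_cell_volume[of n "Suc j" n] sum_cell_volume[of n j n] by simp
  also have "\<dots> = 1 / real n"
    using assms n_pos grid_point_in_unit
    by (simp add: grid_value_def copula3_margins[OF copula] diff_divide_distrib[symmetric])
  finally show ?thesis .
qed

(* Zero beyond the last cell, where C (defined only on the unit cube) gives no sign
   information; this makes cum nondecreasing on all of nat. *)
definition mass :: "nat \<Rightarrow> real" where
  "mass q = (if q < n * n * n then cell_volume (cell1 n q) (cell2 n q) (cell3 n q) else 0)"

definition cum :: "nat \<Rightarrow> real" where
  "cum q = (\<Sum>r<q. mass r)"

lemma mass_nonneg: "0 \<le> mass q"
  unfolding mass_def using n_pos by (simp add: cell_volume_nonneg cell1_less cell2_less cell3_less)

lemma sum_mass_layers:
  assumes "k \<le> n"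
  shows "(\<Sum>q<k * n * n. mass q * f (cell1 n q) (cell2 n q) (cell3 n q))
    = (\<Sum>k'<k. \<Sum>i<n. \<Sum>j<n. cell_volume i j k' * f i j k')"
proof -
  have "q < k * n * n \<Longrightarrow> q < n * n * n" for q
    using assms by (meson less_le_trans mult_le_mono1)
  then have "(\<Sum>q<k * n * n. mass q * f (cell1 n q) (cell2 n q) (cell3 n q))
    = (\<Sum>q<k * n * n. cell_volume (cell1 n q) (cell2 n q) (cell3 n q) * f (cell1 n q) (cell2 n q) (cell3 n q))"
    by (intro sum.cong) (simp_all add: mass_def)
  also have "\<dots> = (\<Sum>k'<k. \<Sum>i<n. \<Sum>j<n. cell_volume i j k' * f i j k')"
    by (rule sum_cells)
  finally show ?thesis .
qed

lemma cum_0 [simp]: "cum 0 = 0"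
  unfolding cum_def by simp

lemma cum_Suc: "cum (Suc q) = cum q + mass q"
  unfolding cum_def by simp

lemma mono_cum: "mono cum"
  unfolding cum_def by (intro monoI sum_mono2) (auto simp: mass_nonneg)

lemma cum_nonneg: "0 \<le> cum q"
  using monoD[OF mono_cum, of 0 q] by simp

lemma cum_layer: "k \<le> n \<Longrightarrow> cum (k * n * n) = real k / real n"
  using sum_mass_layers[of k "\<lambda>_ _ _. 1"] sum_cell_volume[of n n k] n_pos by (simp add: cum_def grid_value_def copula3_margins[OF copula] grid_point_in_unit)

lemma cum_total: "cum (n * n * n) = 1"
  using cum_layer[of n] n_pos by simp

lemma cum_le_1: "cum q \<le> 1"
proof -
  have "cum q \<le> cum (max q (n * n * n))"
    by (rule monoD[OF mono_cum]) simp
  also have "\<dots> = cum (n * n * n)"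
    unfolding cum_def by (rule sum.mono_neutral_right) (auto simp: mass_def)
  finally show ?thesis by (simp add: cum_total)
qed

lemma cum_cell_bounds:
  assumes "q < n * n * n"
  shows "real (cell3 n q) / real n \<le> cum q" "cum (Suc q) \<le> real (Suc (cell3 n q)) / real n"
proof -
  have "cell3 n q * n * n \<le> q"
    unfolding cell3_def using div_times_less_eq_dividend[of q "n * n"] by (simp add: mult.assoc)
  then have "cum (cell3 n q * n * n) \<le> cum q"
    by (rule monoD[OF mono_cum])
  then show "real (cell3 n q) / real n \<le> cum q"
    using cum_layer cell3_less[OF assms] by simp
  have "Suc q \<le> Suc (cell3 n q) * n * n"
    unfolding cell3_def using dividend_less_div_times[of "n * n" q] n_pos by (simp add: algebra_simps)
  then have "cum (Suc q) \<le> cum (Suc (cell3 n q) * n * n)"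
    by (rule monoD[OF mono_cum])
  then show "cum (Suc q) \<le> real (Suc (cell3 n q)) / real n"
    using cum_layer[of "Suc (cell3 n q)"] cell3_less[OF assms] by simp
qed

definition time_in_cell :: "nat \<Rightarrow> real \<Rightarrow> real" where
  "time_in_cell q v = max 0 (min v (cum (Suc q)) - cum q)"

lemma time_in_cell_eq_measure:
  assumes "0 \<le> v"
  shows "time_in_cell q v = measure lborel ({0..v} \<inter> {cum q..<cum (Suc q)})"
proof (cases "v < cum (Suc q)")
  case True
  then have "{0..v} \<inter> {cum q..<cum (Suc q)} = {cum q..v}"
    using cum_nonneg[of q] by auto
  then show ?thesis using True by (simp add: time_in_cell_def max_def)
next
  case False
  then have "{0..v} \<inter> {cum q..<cum (Suc q)} = {cum q..<cum (Suc q)}"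
    using cum_nonneg[of q] by auto
  then show ?thesis using False cum_Suc[of q] mass_nonneg[of q] by (simp add: time_in_cell_def)
qed

lemma time_in_cell_0 [simp]: "time_in_cell q 0 = 0"
  unfolding time_in_cell_def using cum_nonneg[of q] cum_nonneg[of "Suc q"] by simp

lemma time_in_cell_1: "time_in_cell q 1 = mass q"
  unfolding time_in_cell_def using cum_le_1[of "Suc q"] cum_Suc[of q] mass_nonneg[of q] by simp

lemma time_in_cell_mono: "v \<le> v' \<Longrightarrow> time_in_cell q v \<le> time_in_cell q v'"
  unfolding time_in_cell_def by (auto intro!: max.mono min.mono)

lemma time_in_cell_telescope: "0 \<le> v \<Longrightarrow> time_in_cell q v = min v (cum (Suc q)) - min v (cum q)"
  unfolding time_in_cell_def using cum_Suc[of q] mass_nonneg[of q] cum_nonneg[of q]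
  by (auto simp: min_def max_def)

(* The slot of a cell of layer k lies inside [k/n, (k+1)/n] (cum_cell_bounds), so at a grid
   time it has either fully elapsed or not begun. *)
lemma time_in_cell_grid:
  assumes "q < n * n * n" "k \<le> n"
  shows "time_in_cell q (real k / real n) = (if cell3 n q < k then mass q else 0)"
proof (cases "cell3 n q < k")
  case True
  then have "real (Suc (cell3 n q)) / real n \<le> real k / real n"
    by (intro divide_right_mono) auto
  then have "cum (Suc q) \<le> real k / real n"
    using cum_cell_bounds(2)[OF assms(1)] by linarith
  then show ?thesis
    using True cum_Suc[of q] mass_nonneg[of q] unfolding time_in_cell_def by auto
next
  case False
  then have "real k / real n \<le> real (cell3 n q) / real n"
    by (intro divide_right_mono) auto
  then have "real k / real n \<le> cum q"
    using cum_cell_bounds(1)[OF assms(1)] by linarith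
  then show ?thesis
    using False unfolding time_in_cell_def by auto
qed

definition approx :: "real \<Rightarrow> real \<Rightarrow> real \<Rightarrow> real" where
  "approx u1 u2 v =
    (\<Sum>q<n * n * n. time_in_cell q v * cell_cdf n (cell1 n q) u1 * cell_cdf n (cell2 n q) u2)"

lemma approx_grid:
  assumes "a \<le> n" "b \<le> n" "k \<le> n"
  shows "approx (real a / real n) (real b / real n) (real k / real n) = grid_value a b k"
proof -
  define below where "below i j k' = (if k' < k \<and> i < a \<and> j < b then 1 else 0 :: real)" for i j k'
  have "approx (real a / real n) (real b / real n) (real k / real n)
    = (\<Sum>q<n * n * n. mass q * below (cell1 n q) (cell2 n q) (cell3 n q))"
    unfolding approx_def below_def using assms n_pos
    by (intro sum.cong refl) (simp add: time_in_cell_grid cell_cdf_grid)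
  also have "\<dots> = (\<Sum>k'<n. \<Sum>i<n. \<Sum>j<n. cell_volume i j k' * below i j k')"
    by (rule sum_mass_layers) simp
  also have "\<dots> = (\<Sum>k'<n. \<Sum>i<n. \<Sum>j<n.
      if k' < k \<and> i < a \<and> j < b then cell_volume i j k' else 0)"
    by (intro sum.cong refl) (simp add: below_def)
  also have "\<dots> = (\<Sum>k'<k. \<Sum>i<a. \<Sum>j<b. cell_volume i j k')"
    using assms by (rule sum3_lessThan_restrict)
  also have "\<dots> = grid_value a b k"
    using assms by (rule sum_cell_volume)
  finally show ?thesis .
qed

lemma approx_margin1:
  assumes "x \<in> {0..1}" shows "approx x 1 1 = x"
proof -
  have "approx x 1 1 = (\<Sum>q<n * n * n. mass q * cell_cdf n (cell1 n q) x)"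
    unfolding approx_def using n_pos by (simp add: time_in_cell_1 cell_cdf_1 cell2_less)
  also have "\<dots> = (\<Sum>k<n. \<Sum>i<n. \<Sum>j<n. cell_volume i j k * cell_cdf n i x)"
    by (rule sum_mass_layers) simp
  also have "\<dots> = (\<Sum>i<n. cell_cdf n i x * (\<Sum>k<n. \<Sum>j<n. cell_volume i j k))"
    by (subst sum.swap) (simp add: sum_distrib_left sum_distrib_right mult.commute)
  also have "\<dots> = (\<Sum>i<n. cell_cdf n i x) / real n"
    by (simp add: sum_cell_volume_slice1 sum_divide_distrib)
  also have "\<dots> = x"
    using sum_cell_cdf[OF n_pos assms] n_pos by simp
  finally show ?thesis .
qed

lemma approx_margin2:
  assumes "x \<in> {0..1}" shows "approx 1 x 1 = x"
proof -
  have "approx 1 x 1 = (\<Sum>q<n * n * n. mass q * cell_cdf n (cell2 n q) x)"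
    unfolding approx_def using n_pos by (simp add: time_in_cell_1 cell_cdf_1 cell1_less)
  also have "\<dots> = (\<Sum>k<n. \<Sum>i<n. \<Sum>j<n. cell_volume i j k * cell_cdf n j x)"
    by (rule sum_mass_layers) simp
  also have "\<dots> = (\<Sum>k<n. \<Sum>j<n. \<Sum>i<n. cell_volume i j k * cell_cdf n j x)"
    by (intro sum.cong refl sum.swap)
  also have "\<dots> = (\<Sum>j<n. cell_cdf n j x * (\<Sum>k<n. \<Sum>i<n. cell_volume i j k))"
    by (subst sum.swap) (simp add: sum_distrib_left sum_distrib_right mult.commute)
  also have "\<dots> = (\<Sum>j<n. cell_cdf n j x) / real n"
    by (simp add: sum_cell_volume_slice2 sum_divide_distrib)
  also have "\<dots> = x"
    using sum_cell_cdf[OF n_pos assms] n_pos by simp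
  finally show ?thesis .
qed

lemma approx_margin3:
  assumes "x \<in> {0..1}" shows "approx 1 1 x = x"
proof -
  have "approx 1 1 x = (\<Sum>q<n * n * n. min x (cum (Suc q)) - min x (cum q))"
    unfolding approx_def using assms n_pos
    by (intro sum.cong refl) (simp add: cell_cdf_1 cell1_less cell2_less time_in_cell_telescope)
  also have "\<dots> = x"
    using assms sum_lessThan_telescope[of "\<lambda>q. min x (cum q)"] by (simp add: cum_total)
  finally show ?thesis .
qed

lemma copula3_approx: "copula3 approx"
  unfolding copula3_def
proof (intro conjI ballI allI impI)
  fix x y :: real
  show "approx 0 x y = 0" "approx x 0 y = 0" "approx x y 0 = 0"
    unfolding approx_def by simp_all
next
  fix x :: real assume "x \<in> {0..1}"
  then show "approx x 1 1 = x" "approx 1 x 1 = x" "approx 1 1 x = x"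
    by (simp_all add: approx_margin1 approx_margin2 approx_margin3)
next
  fix a1 b1 a2 b2 a3 b3 :: real
  assume "0 \<le> a1 \<and> a1 \<le> b1 \<and> b1 \<le> 1 \<and> 0 \<le> a2 \<and> a2 \<le> b2 \<and> b2 \<le> 1
    \<and> 0 \<le> a3 \<and> a3 \<le> b3 \<and> b3 \<le> 1"
  then have "0 \<le> (\<Sum>q<n * n * n. (time_in_cell q b3 - time_in_cell q a3)
      * (cell_cdf n (cell1 n q) b1 - cell_cdf n (cell1 n q) a1)
      * (cell_cdf n (cell2 n q) b2 - cell_cdf n (cell2 n q) a2))"
    by (intro sum_nonneg mult_nonneg_nonneg) (auto simp: cell_cdf_mono time_in_cell_mono)
  also have "\<dots> = approx b1 b2 b3 - approx a1 b2 b3 - approx b1 a2 b3 - approx b1 b2 a3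
      + approx a1 a2 b3 + approx a1 b2 a3 + approx b1 a2 a3 - approx a1 a2 a3"
    unfolding approx_def sum_subtractf[symmetric] sum.distrib[symmetric]
    by (intro sum.cong refl) (simp add: algebra_simps)
  finally show "0 \<le> approx b1 b2 b3 - approx a1 b2 b3 - approx b1 a2 b3 - approx b1 b2 a3
      + approx a1 a2 b3 + approx a1 b2 a3 + approx b1 a2 a3 - approx a1 a2 a3" .
qed

definition kernel :: "real \<Rightarrow> (real \<times> real) measure" where
  "kernel = step_kernel (\<lambda>q. cell_unif2 n (cell1 n q) (cell2 n q)) cum (n * n * n - 1)"

lemma measurable_kernel: "kernel \<in> borel \<rightarrow>\<^sub>M prob_algebra borel"
  unfolding kernel_def using n_pos by (intro measurable_step_kernel cell_unif2_in_prob_algebra)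

lemma kernel_cases: obtains q where "kernel t = cell_unif2 n (cell1 n q) (cell2 n q)"
  using step_kernel_cases[of "\<lambda>q. cell_unif2 n (cell1 n q) (cell2 n q)" cum "n * n * n - 1" t]
  unfolding kernel_def by blast

lemma measure_kernel_box:
  "measure (kernel t) ({0..u1} \<times> {0..u2}) = F13 kernel t u1 * F23 kernel t u2"
  and F13_kernel: "\<exists>i. F13 kernel t = cell_cdf n i"
  and F23_kernel: "\<exists>j. F23 kernel t = cell_cdf n j"
proof -
  obtain q where q: "kernel t = cell_unif2 n (cell1 n q) (cell2 n q)"
    by (rule kernel_cases)
  have F13: "F13 kernel t = cell_cdf n (cell1 n q)" and F23: "F23 kernel t = cell_cdf n (cell2 n q)"
    unfolding F13_def F23_def q using n_pos
    by (simp_all add: fun_eq_iff measure_cell_unif2_box cell_cdf_1 cell1_less cell2_less)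
  then show "measure (kernel t) ({0..u1} \<times> {0..u2}) = F13 kernel t u1 * F23 kernel t u2"
    using n_pos by (simp add: q measure_cell_unif2_box)
  show "\<exists>i. F13 kernel t = cell_cdf n i" "\<exists>j. F23 kernel t = cell_cdf n j"
    using F13 F23 by blast+
qed

lemma approx_eq_integral_kernel:
  assumes "v \<in> {0..1}"
  shows "approx u1 u2 v = (LINT t:{0..v}|lborel. measure (kernel t) ({0..u1} \<times> {0..u2}))"
proof -
  have "(LINT t:{0..v}|lborel. measure (kernel t) ({0..u1} \<times> {0..u2}))
    = (\<Sum>q<n * n * n. measure lborel ({0..v} \<inter> {cum q..<cum (Suc q)})
        * measure (cell_unif2 n (cell1 n q) (cell2 n q)) ({0..u1} \<times> {0..u2}))"
    unfolding kernel_def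
    by (rule integral_step_kernel[where M = borel])
       (use assms n_pos in \<open>auto simp: cell_unif2_in_prob_algebra mono_cum cum_total borel_closed closed_Times\<close>)
  also have "\<dots> = approx u1 u2 v"
    unfolding approx_def using assms n_pos
    by (intro sum.cong refl) (simp add: time_in_cell_eq_measure measure_cell_unif2_box)
  finally show ?thesis ..
qed

lemma cond_kernel_approx: "cond_kernel approx kernel"
  unfolding cond_kernel_def
proof (intro conjI allI ballI)
  show "kernel \<in> borel \<rightarrow>\<^sub>M prob_algebra borel"
    by (rule measurable_kernel)
next
  fix t
  obtain q where "kernel t = cell_unif2 n (cell1 n q) (cell2 n q)"
    by (rule kernel_cases)
  then show "emeasure (kernel t) ({0..1} \<times> {0..1}) = 1"
    using n_pos by (simp add: emeasure_cell_unif2_unit_square cell1_less cell2_less)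
next
  fix u1 u2 v :: real
  assume "v \<in> {0..1}"
  then show "approx u1 u2 v = (LINT t:{0..v}|lborel. measure (kernel t) ({0..u1} \<times> {0..u2}))"
    by (rule approx_eq_integral_kernel)
qed

lemma simplified_approx: "simplified approx"
  unfolding simplified_def
proof (intro exI conjI)
  show "cond_kernel approx kernel"
    by (rule cond_kernel_approx)
  show "copula2 (\<lambda>a b. a * b)"
    by (rule copula2_product)
  show "\<forall>u1\<in>{0..1}. \<forall>u2\<in>{0..1}. \<forall>v\<in>{0..1}.
      approx u1 u2 v = (LINT t:{0..v}|lborel. F13 kernel t u1 * F23 kernel t u2)"
  proof (intro ballI)
    fix u1 u2 v :: real
    assume "v \<in> {0..1}"
    then show "approx u1 u2 v = (LINT t:{0..v}|lborel. F13 kernel t u1 * F23 kernel t u2)"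
      by (simp only: approx_eq_integral_kernel measure_kernel_box)
  qed
  show "AE t in lborel. t \<in> {0..1} \<longrightarrow>
      continuous_on UNIV (F13 kernel t) \<and> continuous_on UNIV (F23 kernel t)"
  proof (intro AE_I2 impI conjI)
    fix t
    show "continuous_on UNIV (F13 kernel t)"
      using F13_kernel[of t] continuous_on_cell_cdf by auto
    show "continuous_on UNIV (F23 kernel t)"
      using F23_kernel[of t] continuous_on_cell_cdf by auto
  qed
qed

end

theorem corollary3p7:
  shows "\<forall>C. copula3 C \<longrightarrow> (\<forall>\<epsilon>>0. \<exists>S. copula3 S \<and> simplified S \<and> d_inf C S < \<epsilon>)"
proof (intro allI impI)
  fix C :: "real \<Rightarrow> real \<Rightarrow> real \<Rightarrow> real" and \<epsilon> :: real
  assume C: "copula3 C" and "\<epsilon> > 0"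
  obtain n :: nat where n: "6 / \<epsilon> < real n"
    using reals_Archimedean2 by blast
  moreover have "0 < 6 / \<epsilon>"
    using \<open>\<epsilon> > 0\<close> by simp
  ultimately have "0 < n"
    by linarith
  then have "6 / real n < \<epsilon>"
    using n \<open>\<epsilon> > 0\<close> by (simp add: field_simps)
  interpret grid_approximation C n
    using C \<open>0 < n\<close> by unfold_locales
  have "d_inf C approx \<le> 6 / real n"
    using C copula3_approx \<open>0 < n\<close>
    by (rule d_inf_le_of_eq_on_grid) (simp add: approx_grid grid_value_def)
  then show "\<exists>S. copula3 S \<and> simplified S \<and> d_inf C S < \<epsilon>"
    using copula3_approx simplified_approx \<open>6 / real n < \<epsilon>\<close> by force
qed

end
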